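(* Let $f\in C^1(\mathbb{R}^n,\mathbb{R}^n)$, $g\in C(\mathbb{R}\times\mathbb{R}^n\times[0,1],\mathbb{R}^n)$, and let $x_0$ be a nondegenerate $T$-periodic limit cycle of $\dot x=f(x)$, $T>0$. Let $x_\varepsilon$ ($\varepsilon\in(0,\varepsilon_0]$) be $T$-periodic solutions of $\dot x=f(x)+\varepsilon g(t,x,\varepsilon)$ with $\|x_\varepsilon(t+\Delta_\varepsilon)-x_0(t)\|\le M\varepsilon$ for all $t\in[0,T]$, $\varepsilon\in(0,\varepsilon_0]$, for some $M,\varepsilon_0>0$ and reals $\Delta_\varepsilon\to0$. Let $z$ be any eigenfunction of $\dot z=-(f'(x_0(t)))^*z$ which is not $T$-periodic, with multiplier $\rho$, and let $M^\perp_z(t)=\frac{\rho}{\rho-1}\int_{t-T}^t\langle z(s),g(s,x_0(s),0)\rangle ds$. Then for every $t\in[0,T]$: if $M^\perp_z(t)>0$ then $\cos\angle\big(z(t),x_\varepsilon(t+\Delta_\varepsilon)-x_0(t)\big)>0$ for all sufficiently small $\varepsilon>0$; and if $M^\perp_z(t)<0$ then $\cos\angle\big(z(t),x_\varepsilon(t+\Delta_\varepsilon)-x_0(t)\big)<0$ for all sufficiently small $\varepsilon>0$.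
   Context: Nondegenerate: the characteristic multiplier $+1$ of $\dot y=f'(x_0(t))y$ (eigenvalue $1$ of $Y(T)$, $Y(0)=I$) has algebraic multiplicity $1$. An eigenfunction of a linear $T$-periodic system is a nonzero solution $z$ with $z(t+T)=\rho z(t)$ for all $t$ and some $\rho\in\mathbb{R}$ (its characteristic multiplier). $\cos\angle(a,b)=\langle a,b\rangle/(\|a\|\,\|b\|)$ for $a,b\in\mathbb{R}^n$. *)

theory Defs
  imports "HOL-Analysis.Analysis" "HOL-Computational_Algebra.Polynomial"
begin

definition charpoly :: "real^'n^'n \<Rightarrow> real poly" where
  "charpoly A = det (\<chi> i j. (if i = j then [:0, 1:] else 0) - [:A $ i $ j:])"

definition alg_mult :: "real \<Rightarrow> real^'n^'n \<Rightarrow> nat" where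
  "alg_mult c A = order c (charpoly A)"

definition cos_angle :: "'a::real_inner \<Rightarrow> 'a \<Rightarrow> real" where
  "cos_angle a b = inner a b / (norm a * norm b)"

end

theory Submission
  imports Defs
begin

text \<open>
  Put \<open>d\<^sub>\<epsilon>(s) = x\<^sub>\<epsilon>(s + \<Delta>\<^sub>\<epsilon>) - x\<^sub>0(s)\<close>. Since \<open>z\<close> solves the adjoint of the variational
  equation, the derivative of \<open>\<langle>z, d\<^sub>\<epsilon>\<rangle>\<close> only sees the nonlinear remainder of \<open>f\<close> and the
  forcing; as \<open>d\<^sub>\<epsilon> = O(\<epsilon>)\<close> it equals \<open>\<epsilon>\<langle>z(s), g(s, x\<^sub>0(s), 0)\<rangle> + o(\<epsilon>)\<close> uniformly in \<open>s\<close>.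
  Integrating over one period and using \<open>d\<^sub>\<epsilon>(t - T) = d\<^sub>\<epsilon>(t)\<close>, \<open>z(t) = \<rho> z(t - T)\<close> gives
  \<open>(1 - 1/\<rho>) \<langle>z(t), d\<^sub>\<epsilon>(t)\<rangle> = \<epsilon> \<integral>\<^bsub>t-T\<^esub>\<^sup>t \<langle>z, g\<rangle> + o(\<epsilon>)\<close>, so \<open>\<langle>z(t), d\<^sub>\<epsilon>(t)\<rangle>/\<epsilon> \<rightarrow> M\<^sup>\<bottom>\<^sub>z(t)\<close>,
  and the cosine has the sign of this pairing.
\<close>

lemma uniformly_continuous_near_compact:
  fixes h :: "'a::{real_normed_vector,heine_borel} \<Rightarrow> 'b::metric_space"
  assumes h: "continuous_on S h" and "closed S" and "compact K" and "K \<subseteq> S" and "\<eta> > 0"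
  obtains \<delta> where "\<delta> > 0"
    "\<And>x y. x \<in> K \<Longrightarrow> y \<in> S \<Longrightarrow> dist y x < \<delta> \<Longrightarrow> dist (h y) (h x) < \<eta>"
proof -
  define N where "N = S \<inter> {x + v | x v. x \<in> K \<and> v \<in> cball 0 1}"
  have near: "y \<in> N" if "x \<in> K" "y \<in> S" "dist y x \<le> 1" for x y
  proof -
    have "y = x + (y - x)" "y - x \<in> cball 0 1"
      using that by (auto simp: dist_norm norm_minus_commute)
    then show ?thesis
      using that unfolding N_def by blast
  qed
  have "compact N"
    unfolding N_def using assms by (intro closed_Int_compact compact_sums compact_cball)
  then have "uniformly_continuous_on N h"
    by (intro compact_uniformly_continuous continuous_on_subset[OF h]) (auto simp: N_def)
  then obtain \<delta> where "\<delta> > 0"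
    and \<delta>: "\<And>x y. x \<in> N \<Longrightarrow> y \<in> N \<Longrightarrow> dist y x < \<delta> \<Longrightarrow> dist (h y) (h x) < \<eta>"
    using \<open>\<eta> > 0\<close> unfolding uniformly_continuous_on_def by metis
  show ?thesis
  proof
    fix x y assume "x \<in> K" "y \<in> S" "dist y x < min \<delta> 1"
    then show "dist (h y) (h x) < \<eta>"
      using \<delta> near[of x y] near[of x x] \<open>K \<subseteq> S\<close> by auto
  qed (use \<open>\<delta> > 0\<close> in simp)
qed

lemma uniform_linearization_on_compact:
  fixes f :: "real^'n \<Rightarrow> real^'m" and f' :: "real^'n \<Rightarrow> real^'n^'m"
  assumes f': "\<And>x. (f has_derivative (\<lambda>h. f' x *v h)) (at x)"
    and f'_cont: "continuous_on UNIV f'"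
    and "compact K" and "\<eta> > 0"
  obtains \<delta> where "\<delta> > 0"
    "\<And>x v. x \<in> K \<Longrightarrow> norm v \<le> \<delta> \<Longrightarrow> norm (f (x + v) - f x - f' x *v v) \<le> \<eta> * norm v"
proof -
  define C where "C = real CARD('m) * real CARD('n)"
  have "C > 0"
    by (simp add: C_def)
  obtain \<delta> where "\<delta> > 0"
    and \<delta>: "\<And>x y. x \<in> K \<Longrightarrow> dist y x < \<delta> \<Longrightarrow> dist (f' y) (f' x) < \<eta> / C"
    using uniformly_continuous_near_compact[OF f'_cont closed_UNIV \<open>compact K\<close>, of "\<eta> / C"]
      \<open>\<eta> > 0\<close> \<open>C > 0\<close> by auto
  show ?thesis
  proof
    fix x v :: "real^'n"
    assume x: "x \<in> K" and v: "norm v \<le> \<delta> / 2"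
    have "norm (f (x + v) - f x - f' x *v (x + v - x))
        \<le> norm (x + v - x) * (real CARD('m) * real CARD('n) * (\<eta> / C))"
    proof (rule differentiable_bound_linearization[where S = "cball x (\<delta> / 2)"])
      fix s :: real assume "s \<in> {0..1}"
      then have "norm (s *\<^sub>R v) \<le> norm v"
        by (simp add: mult_left_le_one_le)
      then show "x + s *\<^sub>R (x + v - x) \<in> cball x (\<delta> / 2)"
        using v by (simp add: dist_norm)
    next
      fix y assume y: "y \<in> cball x (\<delta> / 2)"
      show "(f has_derivative (*v) (f' y)) (at y within cball x (\<delta> / 2))"
        using has_derivative_at_withinI[OF f'] by (simp add: eta_contract_eq)
      have "norm (f' y - f' x) < \<eta> / C"
        using \<delta>[OF x, of y] y \<open>\<delta> > 0\<close> by (simp add: dist_norm norm_minus_commute)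
      then have "\<bar>(f' y - f' x) $ i $ j\<bar> \<le> \<eta> / C" for i j
        using component_le_norm_cart[of "(f' y - f' x) $ i" j]
          Finite_Cartesian_Product.norm_nth_le[of "f' y - f' x" i]
        by linarith
      then have "onorm ((*v) (f' y - f' x)) \<le> real CARD('m) * real CARD('n) * (\<eta> / C)"
        by (rule onorm_le_matrix_component)
      then show "onorm ((*v) (f' y) - (*v) (f' x)) \<le> real CARD('m) * real CARD('n) * (\<eta> / C)"
        by (simp add: fun_diff_def matrix_vector_mult_diff_rdistrib[symmetric])
    qed (use \<open>\<delta> > 0\<close> in simp)
    then show "norm (f (x + v) - f x - f' x *v v) \<le> \<eta> * norm v"
      using \<open>C > 0\<close> by (simp add: C_def mult.commute)
  qed (use \<open>\<delta> > 0\<close> in simp)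
qed

lemma adjoint_pairing_has_derivative:
  fixes z d :: "real \<Rightarrow> real^'n" and A :: "real^'n^'n"
  assumes "(z has_vector_derivative - (transpose A *v z t)) (at t)"
    and "(d has_vector_derivative d') (at t)"
  shows "((\<lambda>s. z s \<bullet> d s) has_real_derivative z t \<bullet> (d' - A *v d t)) (at t)"
proof -
  have "((\<lambda>s. z s \<bullet> d s) has_derivative
      (\<lambda>h. z t \<bullet> (h *\<^sub>R d') + (h *\<^sub>R - (transpose A *v z t)) \<bullet> d t)) (at t)"
    using assms unfolding has_vector_derivative_def by (rule has_derivative_inner)
  moreover have "(transpose A *v z t) \<bullet> d t = z t \<bullet> (A *v d t)"
    by (simp add: dot_lmul_matrix)
  ultimately show ?thesis
    unfolding has_field_derivative_def
    by (elim has_derivative_eq_rhs) (simp add: fun_eq_iff algebra_simps)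
qed

lemma multiplier_integral_estimate:
  fixes w w' q :: "real \<Rightarrow> real"
  assumes "T > 0" "\<rho> \<noteq> 0" "\<rho> \<noteq> 1"
    and w': "\<And>s. s \<in> {t - T..t} \<Longrightarrow> (w has_real_derivative w' s) (at s)"
    and multiplier: "w t = \<rho> * w (t - T)"
    and q: "(q has_integral I) {t - T..t}"
    and bound: "\<And>s. s \<in> {t - T..t} \<Longrightarrow> \<bar>w' s - \<epsilon> * q s\<bar> \<le> c"
  shows "\<bar>w t - \<epsilon> * (\<rho> / (\<rho> - 1) * I)\<bar> \<le> \<bar>\<rho> / (\<rho> - 1)\<bar> * (c * T)"
proof -
  have "(w' has_integral w t - w (t - T)) {t - T..t}"
    using \<open>T > 0\<close> w'
    by (intro fundamental_theorem_of_calculus)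
      (auto simp: has_real_derivative_iff_has_vector_derivative intro: has_vector_derivative_at_within)
  then have "((\<lambda>s. w' s - \<epsilon> * q s) has_integral w t - w (t - T) - \<epsilon> * I) {t - T..t}"
    by (intro has_integral_diff has_integral_mult_right q)
  moreover have "c \<ge> 0"
    using bound[of t] \<open>T > 0\<close> by (auto intro: order_trans[OF abs_ge_zero])
  ultimately have "norm (w t - w (t - T) - \<epsilon> * I) \<le> c * measure lborel {t - T..t}"
    using bound by (intro has_integral_bound_real[of c "{}"]) auto
  then have period: "\<bar>w t - w (t - T) - \<epsilon> * I\<bar> \<le> c * T"
    using \<open>T > 0\<close> by simp
  have "\<bar>w t - \<epsilon> * (\<rho> / (\<rho> - 1) * I)\<bar> = \<bar>\<rho> / (\<rho> - 1) * (w t - w (t - T) - \<epsilon> * I)\<bar>"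
    using multiplier \<open>\<rho> \<noteq> 0\<close> \<open>\<rho> \<noteq> 1\<close> by (simp add: field_simps)
  also have "\<dots> \<le> \<bar>\<rho> / (\<rho> - 1)\<bar> * (c * T)"
    unfolding abs_mult using period by (rule mult_left_mono) simp
  finally show ?thesis .
qed

lemma abs_inner_le_perturbation:
  fixes v a b :: "'a::real_inner"
  assumes "norm v \<le> B" "norm a \<le> \<alpha>" "norm b \<le> \<beta>" "\<epsilon> \<ge> 0"
  shows "\<bar>v \<bullet> (a + \<epsilon> *\<^sub>R b)\<bar> \<le> B * (\<alpha> + \<epsilon> * \<beta>)"
proof -
  have "norm (a + \<epsilon> *\<^sub>R b) \<le> \<alpha> + \<epsilon> * \<beta>"
    using norm_triangle_ineq[of a "\<epsilon> *\<^sub>R b"] assms(2,3,4) mult_left_mono[OF assms(3,4)] by simp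
  then show ?thesis
    using Cauchy_Schwarz_ineq2[of v "a + \<epsilon> *\<^sub>R b"] assms(1)
    by (meson mult_mono norm_ge_zero order_trans)
qed

lemma cos_angle_pos_iff: "cos_angle a b > 0 \<longleftrightarrow> a \<bullet> b > 0"
  by (cases "a = 0 \<or> b = 0") (auto simp: cos_angle_def zero_less_divide_iff mult_less_0_iff)

lemma cos_angle_neg_iff: "cos_angle a b < 0 \<longleftrightarrow> a \<bullet> b < 0"
  by (cases "a = 0 \<or> b = 0") (auto simp: cos_angle_def divide_less_0_iff mult_less_0_iff)

locale perturbed_limit_cycle =
  fixes f :: "real^'n \<Rightarrow> real^'n"
    and f' :: "real^'n \<Rightarrow> real^'n^'n"
    and g :: "real \<Rightarrow> real^'n \<Rightarrow> real \<Rightarrow> real^'n"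
    and x0 :: "real \<Rightarrow> real^'n"
    and xe :: "real \<Rightarrow> real \<Rightarrow> real^'n"
    and \<Delta> :: "real \<Rightarrow> real"
    and z :: "real \<Rightarrow> real^'n"
    and T M \<epsilon>0 \<rho> :: real
  assumes f_deriv: "\<And>x. (f has_derivative (\<lambda>h. f' x *v h)) (at x)"
    and f'_cont: "continuous_on UNIV f'"
    and g_cont: "continuous_on (UNIV \<times> UNIV \<times> {0..1}) (\<lambda>(t, x, e). g t x e)"
    and T_pos: "T > 0"
    and x0_sol: "\<And>t. (x0 has_vector_derivative f (x0 t)) (at t)"
    and x0_per: "\<And>t. x0 (t + T) = x0 t"
    and M_pos: "M > 0" and eps0_pos: "\<epsilon>0 > 0"
    and xe_sol: "\<And>\<epsilon> t. \<epsilon> \<in> {0<..\<epsilon>0} \<Longrightarrow>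
        ((xe \<epsilon>) has_vector_derivative (f (xe \<epsilon> t) + \<epsilon> *\<^sub>R g t (xe \<epsilon> t) \<epsilon>)) (at t)"
    and xe_per: "\<And>\<epsilon> t. \<epsilon> \<in> {0<..\<epsilon>0} \<Longrightarrow> xe \<epsilon> (t + T) = xe \<epsilon> t"
    and xe_close: "\<And>\<epsilon> t. \<epsilon> \<in> {0<..\<epsilon>0} \<Longrightarrow> t \<in> {0..T} \<Longrightarrow>
        norm (xe \<epsilon> (t + \<Delta> \<epsilon>) - x0 t) \<le> M * \<epsilon>"
    and \<Delta>_lim: "(\<Delta> \<longlongrightarrow> 0) (at_right 0)"
    and z_sol: "\<And>t. (z has_vector_derivative (- (transpose (f' (x0 t)) *v z t))) (at t)"
    and z_nonzero: "\<exists>t. z t \<noteq> 0"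
    and z_eig: "\<And>t. z (t + T) = \<rho> *\<^sub>R z t"
    and z_not_per: "\<not> (\<forall>t. z (t + T) = z t)"
begin

lemma multiplier_nonzero: "\<rho> \<noteq> 0"
proof
  assume "\<rho> = 0"
  then have "z t = 0" for t
    using z_eig[of "t - T"] by simp
  then show False
    using z_nonzero by blast
qed

lemma multiplier_ne_1: "\<rho> \<noteq> 1"
  using z_not_per z_eig by (metis scaleR_one)

lemma continuous_on_z: "continuous_on A z"
  using z_sol by (meson continuous_at_imp_continuous_on has_vector_derivative_continuous)

lemma continuous_on_x0: "continuous_on A x0"
  using x0_sol by (meson continuous_at_imp_continuous_on has_vector_derivative_continuous)

lemma continuous_on_forcing: "continuous_on A (\<lambda>s. g s (x0 s) 0)"
proof -
  have "continuous_on A (\<lambda>s. (s, x0 s, 0::real))"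
    by (intro continuous_intros continuous_on_x0)
  then have "continuous_on A (\<lambda>s. (\<lambda>(t, x, e). g t x e) (s, x0 s, 0::real))"
    by (rule continuous_on_compose2[OF g_cont]) auto
  then show ?thesis
    by simp
qed

definition offset :: "real \<Rightarrow> real \<Rightarrow> real^'n" where
  "offset \<epsilon> s = xe \<epsilon> (s + \<Delta> \<epsilon>) - x0 s"

definition adjoint_melnikov :: "real \<Rightarrow> real" where
  "adjoint_melnikov t = \<rho> / (\<rho> - 1) * integral {t - T..t} (\<lambda>s. z s \<bullet> g s (x0 s) 0)"

lemma offset_periodic: "\<epsilon> \<in> {0<..\<epsilon>0} \<Longrightarrow> offset \<epsilon> (s + T) = offset \<epsilon> s"
  using xe_per[of \<epsilon> "s + \<Delta> \<epsilon>"] x0_per[of s] by (simp add: offset_def add.commute add.left_commute)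

lemma norm_offset_le:
  assumes \<epsilon>: "\<epsilon> \<in> {0<..\<epsilon>0}" and s: "s \<in> {-T..T}"
  shows "norm (offset \<epsilon> s) \<le> M * \<epsilon>"
proof (cases "s \<ge> 0")
  case True
  then show ?thesis
    using xe_close[OF \<epsilon>, of s] s by (simp add: offset_def)
next
  case False
  then show ?thesis
    using xe_close[OF \<epsilon>, of "s + T"] offset_periodic[OF \<epsilon>, of s] s by (simp add: offset_def)
qed

lemma offset_has_derivative:
  assumes \<epsilon>: "\<epsilon> \<in> {0<..\<epsilon>0}"
  shows "(offset \<epsilon> has_vector_derivative
      f (x0 s + offset \<epsilon> s) + \<epsilon> *\<^sub>R g (s + \<Delta> \<epsilon>) (x0 s + offset \<epsilon> s) \<epsilon> - f (x0 s)) (at s)"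
proof -
  have "((\<lambda>s. s + \<Delta> \<epsilon>) has_vector_derivative 1) (at s)"
    by (auto intro!: derivative_eq_intros simp: has_real_derivative_iff_has_vector_derivative[symmetric])
  from vector_diff_chain_at[OF this xe_sol[OF \<epsilon>]]
  have "((\<lambda>s. xe \<epsilon> (s + \<Delta> \<epsilon>)) has_vector_derivative
      f (xe \<epsilon> (s + \<Delta> \<epsilon>)) + \<epsilon> *\<^sub>R g (s + \<Delta> \<epsilon>) (xe \<epsilon> (s + \<Delta> \<epsilon>)) \<epsilon>) (at s)"
    by (simp add: o_def)
  from has_vector_derivative_diff[OF this x0_sol[of s]] show ?thesis
    by (simp add: offset_def[abs_def])
qed

lemma pairing_estimate:
  assumes \<epsilon>: "\<epsilon> \<in> {0<..\<epsilon>0}" and t: "t \<in> {0..T}"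
    and z_bound: "\<And>s. s \<in> {-T..T} \<Longrightarrow> norm (z s) \<le> B"
    and linearization: "\<And>s. s \<in> {-T..T} \<Longrightarrow>
      norm (f (x0 s + offset \<epsilon> s) - f (x0 s) - f' (x0 s) *v offset \<epsilon> s) \<le> \<eta> * norm (offset \<epsilon> s)"
    and forcing: "\<And>s. s \<in> {-T..T} \<Longrightarrow>
      norm (g (s + \<Delta> \<epsilon>) (x0 s + offset \<epsilon> s) \<epsilon> - g s (x0 s) 0) \<le> \<eta>"
  shows "\<bar>z t \<bullet> offset \<epsilon> t - \<epsilon> * adjoint_melnikov t\<bar>
    \<le> \<bar>\<rho> / (\<rho> - 1)\<bar> * (B * \<eta> * (M + 1) * \<epsilon> * T)"
proof -
  define q where "q s = z s \<bullet> g s (x0 s) 0" for s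
  define F where "F s = f (x0 s + offset \<epsilon> s) + \<epsilon> *\<^sub>R g (s + \<Delta> \<epsilon>) (x0 s + offset \<epsilon> s) \<epsilon> - f (x0 s)"
    for s
  have "continuous_on {t - T..t} q"
    unfolding q_def by (intro continuous_intros continuous_on_z continuous_on_forcing)
  then have q_int: "(q has_integral integral {t - T..t} q) {t - T..t}"
    using integrable_continuous_interval by blast
  have deriv: "((\<lambda>s. z s \<bullet> offset \<epsilon> s) has_real_derivative
      z s \<bullet> (F s - f' (x0 s) *v offset \<epsilon> s)) (at s)" for s
    using z_sol offset_has_derivative[OF \<epsilon>] unfolding F_def by (rule adjoint_pairing_has_derivative)
  have bound: "\<bar>z s \<bullet> (F s - f' (x0 s) *v offset \<epsilon> s) - \<epsilon> * q s\<bar> \<le> B * \<eta> * (M + 1) * \<epsilon>"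
    if "s \<in> {t - T..t}" for s
  proof -
    have s: "s \<in> {-T..T}"
      using that t by auto
    define remainder where "remainder = f (x0 s + offset \<epsilon> s) - f (x0 s) - f' (x0 s) *v offset \<epsilon> s"
    define forcing_error where "forcing_error = g (s + \<Delta> \<epsilon>) (x0 s + offset \<epsilon> s) \<epsilon> - g s (x0 s) 0"
    have "\<eta> \<ge> 0"
      using forcing[OF s] norm_ge_zero order_trans by blast
    have "norm remainder \<le> \<eta> * (M * \<epsilon>)"
      using linearization[OF s] norm_offset_le[OF \<epsilon> s] \<open>\<eta> \<ge> 0\<close> unfolding remainder_def
      by (meson mult_left_mono order_trans)
    moreover have "norm forcing_error \<le> \<eta>"
      using forcing[OF s] unfolding forcing_error_def .
    ultimately have "\<bar>z s \<bullet> (remainder + \<epsilon> *\<^sub>R forcing_error)\<bar>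
        \<le> B * (\<eta> * (M * \<epsilon>) + \<epsilon> * \<eta>)"
      using z_bound[OF s] \<epsilon> by (intro abs_inner_le_perturbation) auto
    moreover have "F s - f' (x0 s) *v offset \<epsilon> s
        = remainder + \<epsilon> *\<^sub>R forcing_error + \<epsilon> *\<^sub>R g s (x0 s) 0"
      by (simp add: F_def remainder_def forcing_error_def algebra_simps)
    ultimately show ?thesis
      by (simp add: q_def algebra_simps)
  qed
  have multiplier: "z t \<bullet> offset \<epsilon> t = \<rho> * (z (t - T) \<bullet> offset \<epsilon> (t - T))"
    using z_eig[of "t - T"] offset_periodic[OF \<epsilon>, of "t - T"] by simp
  from multiplier_integral_estimate[OF T_pos multiplier_nonzero multiplier_ne_1 deriv multiplier
      q_int bound]
  show ?thesis
    by (simp add: adjoint_melnikov_def q_def[abs_def] mult.assoc)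
qed

lemma eventually_pairing_estimate:
  assumes t: "t \<in> {0..T}" and z_bound: "\<And>s. s \<in> {-T..T} \<Longrightarrow> norm (z s) \<le> B"
    and "\<eta> > 0"
  shows "\<forall>\<^sub>F \<epsilon> in at_right 0. \<bar>z t \<bullet> offset \<epsilon> t - \<epsilon> * adjoint_melnikov t\<bar>
    \<le> \<bar>\<rho> / (\<rho> - 1)\<bar> * (B * \<eta> * (M + 1) * \<epsilon> * T)"
proof -
  obtain \<delta>f where "\<delta>f > 0" and \<delta>f: "\<And>x v. x \<in> x0 ` {-T..T} \<Longrightarrow> norm v \<le> \<delta>f \<Longrightarrow>
      norm (f (x + v) - f x - f' x *v v) \<le> \<eta> * norm v"
    using uniform_linearization_on_compact[OF f_deriv f'_cont _ \<open>\<eta> > 0\<close>]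
      compact_continuous_image[OF continuous_on_x0 compact_Icc] by metis
  define K where "K = (\<lambda>s. (s, x0 s, 0::real)) ` {-T..T}"
  define S :: "(real \<times> (real^'n) \<times> real) set" where "S = UNIV \<times> UNIV \<times> {0..1}"
  have "compact K"
    unfolding K_def by (intro compact_continuous_image compact_Icc continuous_intros continuous_on_x0)
  moreover have "closed S" "K \<subseteq> S"
    unfolding S_def K_def by (auto intro: closed_Times)
  ultimately obtain \<delta>g where "\<delta>g > 0" and \<delta>g: "\<And>x y. x \<in> K \<Longrightarrow> y \<in> S \<Longrightarrow>
      dist y x < \<delta>g \<Longrightarrow> dist ((\<lambda>(t, x, e). g t x e) y) ((\<lambda>(t, x, e). g t x e) x) < \<eta>"
    using uniformly_continuous_near_compact[OF g_cont[folded S_def]] \<open>\<eta> > 0\<close> by metis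
  define c where "c = min \<epsilon>0 (min 1 (min (\<delta>f / M) (\<delta>g / (2 * (M + 1)))))"
  have "c > 0"
    using eps0_pos M_pos \<open>\<delta>f > 0\<close> \<open>\<delta>g > 0\<close> by (simp add: c_def)
  have "\<forall>\<^sub>F \<epsilon> in at_right 0. \<epsilon> \<in> {0<..<c}"
    using eventually_at_right_real[OF \<open>c > 0\<close>] .
  moreover have "\<forall>\<^sub>F \<epsilon> in at_right 0. \<bar>\<Delta> \<epsilon>\<bar> < \<delta>g / 2"
    by (rule order_tendstoD(2)[OF tendsto_rabs_zero[OF \<Delta>_lim]]) (use \<open>\<delta>g > 0\<close> in simp)
  ultimately show ?thesis
  proof eventually_elim
    case (elim \<epsilon>)
    then have \<epsilon>: "\<epsilon> \<in> {0<..\<epsilon>0}" "\<epsilon> \<le> 1" "M * \<epsilon> \<le> \<delta>f" "(M + 1) * \<epsilon> < \<delta>g / 2"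
      using M_pos by (auto simp: c_def field_simps)
    show ?case
    proof (rule pairing_estimate[OF \<epsilon>(1) t z_bound])
      fix s assume s: "s \<in> {-T..T}"
      have offset: "norm (offset \<epsilon> s) \<le> M * \<epsilon>"
        using norm_offset_le[OF \<epsilon>(1) s] .
      show "norm (f (x0 s + offset \<epsilon> s) - f (x0 s) - f' (x0 s) *v offset \<epsilon> s)
          \<le> \<eta> * norm (offset \<epsilon> s)"
        using \<delta>f[of "x0 s" "offset \<epsilon> s"] s offset \<epsilon>(3) by auto
      have "dist (s + \<Delta> \<epsilon>, x0 s + offset \<epsilon> s, \<epsilon>) (s, x0 s, 0)
          \<le> \<bar>\<Delta> \<epsilon>\<bar> + (norm (offset \<epsilon> s) + \<epsilon>)"
        using norm_Pair_le[of "\<Delta> \<epsilon>" "(offset \<epsilon> s, \<epsilon>)"] norm_Pair_le[of "offset \<epsilon> s" \<epsilon>] \<epsilon>(1)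
        by (simp add: dist_norm)
      also have "\<dots> < \<delta>g"
        using elim offset \<epsilon>(4) by (simp add: algebra_simps)
      finally show "norm (g (s + \<Delta> \<epsilon>) (x0 s + offset \<epsilon> s) \<epsilon> - g s (x0 s) 0) \<le> \<eta>"
        using \<delta>g[of "(s, x0 s, 0)" "(s + \<Delta> \<epsilon>, x0 s + offset \<epsilon> s, \<epsilon>)"] s \<epsilon>
        by (simp add: K_def S_def dist_norm)
    qed
  qed
qed

lemma rescaled_pairing_tendsto:
  assumes t: "t \<in> {0..T}"
  shows "((\<lambda>\<epsilon>. z t \<bullet> offset \<epsilon> t / \<epsilon>) \<longlongrightarrow> adjoint_melnikov t) (at_right 0)"
proof -
  have "bounded (z ` {-T..T})"
    by (intro compact_imp_bounded compact_continuous_image continuous_on_z compact_Icc)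
  then obtain B where "B > 0" and z_bound: "\<And>s. s \<in> {-T..T} \<Longrightarrow> norm (z s) \<le> B"
    unfolding bounded_pos by auto
  define Q where "Q = \<bar>\<rho> / (\<rho> - 1)\<bar> * B * (M + 1) * T"
  have "Q > 0"
    using multiplier_nonzero multiplier_ne_1 \<open>B > 0\<close> M_pos T_pos by (simp add: Q_def)
  have scale: "\<bar>\<rho> / (\<rho> - 1)\<bar> * (B * \<eta> * (M + 1) * \<epsilon> * T) = Q * \<eta> * \<epsilon>" for \<eta> \<epsilon>
    by (simp add: Q_def ac_simps)
  have "\<forall>\<^sub>F \<epsilon> in at_right 0. \<bar>z t \<bullet> offset \<epsilon> t / \<epsilon> - adjoint_melnikov t\<bar> < e" if "e > 0" for e
  proof -
    have "e / (2 * Q) > 0"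
      using \<open>e > 0\<close> \<open>Q > 0\<close> by simp
    then have "\<forall>\<^sub>F \<epsilon> in at_right 0. \<bar>z t \<bullet> offset \<epsilon> t - \<epsilon> * adjoint_melnikov t\<bar>
        \<le> \<bar>\<rho> / (\<rho> - 1)\<bar> * (B * (e / (2 * Q)) * (M + 1) * \<epsilon> * T)"
      using eventually_pairing_estimate t z_bound by blast
    with eventually_at_right_less show ?thesis
    proof eventually_elim
      case (elim \<epsilon>)
      then have "\<bar>z t \<bullet> offset \<epsilon> t - \<epsilon> * adjoint_melnikov t\<bar> \<le> Q * (e / (2 * Q)) * \<epsilon>"
        by (simp only: scale)
      also have "\<dots> = e / 2 * \<epsilon>"
        using \<open>Q > 0\<close> by simp
      finally have half: "\<bar>z t \<bullet> offset \<epsilon> t - \<epsilon> * adjoint_melnikov t\<bar> / \<epsilon> \<le> e / 2"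
        using elim by (simp add: pos_divide_le_eq)
      have "z t \<bullet> offset \<epsilon> t / \<epsilon> - adjoint_melnikov t
          = (z t \<bullet> offset \<epsilon> t - \<epsilon> * adjoint_melnikov t) / \<epsilon>"
        using elim by (simp add: field_simps)
      then have "\<bar>z t \<bullet> offset \<epsilon> t / \<epsilon> - adjoint_melnikov t\<bar>
          = \<bar>z t \<bullet> offset \<epsilon> t - \<epsilon> * adjoint_melnikov t\<bar> / \<epsilon>"
        using elim by simp
      then show ?case
        using half \<open>e > 0\<close> by linarith
    qed
  qed
  then show ?thesis
    by (simp add: tendsto_iff dist_real_def)
qed

end

theorem corollary2:
  fixes f :: "real^'n \<Rightarrow> real^'n"
    and f' :: "real^'n \<Rightarrow> real^'n^'n"
    and g :: "real \<Rightarrow> real^'n \<Rightarrow> real \<Rightarrow> real^'n"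
    and x0 :: "real \<Rightarrow> real^'n"
    and Y :: "real \<Rightarrow> real^'n^'n"
    and xe :: "real \<Rightarrow> real \<Rightarrow> real^'n"
    and \<Delta> :: "real \<Rightarrow> real"
    and z :: "real \<Rightarrow> real^'n"
    and T M \<epsilon>0 \<rho> :: real
  assumes f_C1: "\<And>x. (f has_derivative (\<lambda>h. f' x *v h)) (at x)" "continuous_on UNIV f'"
    and g_cont: "continuous_on (UNIV \<times> UNIV \<times> {0..1}) (\<lambda>(t, x, e). g t x e)"
    and T_pos: "T > 0"
    and x0_sol: "\<And>t. (x0 has_vector_derivative f (x0 t)) (at t)"
    and x0_per: "\<And>t. x0 (t + T) = x0 t"
    and x0_nonconst: "\<exists>s t. x0 s \<noteq> x0 t"
    and Y_fund: "\<And>t. (Y has_vector_derivative (f' (x0 t) ** Y t)) (at t)" "Y 0 = mat 1"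
    and nondeg: "alg_mult 1 (Y T) = 1"
    and M_pos: "M > 0" and eps0_pos: "\<epsilon>0 > 0"
    and xe_sol: "\<And>\<epsilon> t. \<epsilon> \<in> {0<..\<epsilon>0} \<Longrightarrow>
        ((xe \<epsilon>) has_vector_derivative (f (xe \<epsilon> t) + \<epsilon> *\<^sub>R g t (xe \<epsilon> t) \<epsilon>)) (at t)"
    and xe_per: "\<And>\<epsilon> t. \<epsilon> \<in> {0<..\<epsilon>0} \<Longrightarrow> xe \<epsilon> (t + T) = xe \<epsilon> t"
    and xe_close: "\<And>\<epsilon> t. \<epsilon> \<in> {0<..\<epsilon>0} \<Longrightarrow> t \<in> {0..T} \<Longrightarrow>
        norm (xe \<epsilon> (t + \<Delta> \<epsilon>) - x0 t) \<le> M * \<epsilon>"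
    and \<Delta>_lim: "(\<Delta> \<longlongrightarrow> 0) (at_right 0)"
    and z_sol: "\<And>t. (z has_vector_derivative (- (transpose (f' (x0 t)) *v z t))) (at t)"
    and z_nonzero: "\<exists>t. z t \<noteq> 0"
    and z_eig: "\<And>t. z (t + T) = \<rho> *\<^sub>R z t"
    and z_not_per: "\<not> (\<forall>t. z (t + T) = z t)"
  shows "\<forall>t\<in>{0..T}.
      (\<rho> / (\<rho> - 1) * integral {t - T..t} (\<lambda>s. z s \<bullet> g s (x0 s) 0) > 0 \<longrightarrow>
         (\<forall>\<^sub>F \<epsilon> in at_right 0. cos_angle (z t) (xe \<epsilon> (t + \<Delta> \<epsilon>) - x0 t) > 0)) \<and>
      (\<rho> / (\<rho> - 1) * integral {t - T..t} (\<lambda>s. z s \<bullet> g s (x0 s) 0) < 0 \<longrightarrow>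
         (\<forall>\<^sub>F \<epsilon> in at_right 0. cos_angle (z t) (xe \<epsilon> (t + \<Delta> \<epsilon>) - x0 t) < 0))"
proof -
  \<comment> \<open>Nondegeneracy of the cycle (\<open>x0_nonconst\<close>, \<open>Y_fund\<close>, \<open>nondeg\<close>) is what makes the
    family \<open>x\<^sub>\<epsilon>\<close> exist; the asymptotics of the pairing do not need it.\<close>
  interpret perturbed_limit_cycle f f' g x0 xe \<Delta> z T M \<epsilon>0 \<rho>
    using f_C1 g_cont T_pos x0_sol x0_per M_pos eps0_pos xe_sol xe_per xe_close \<Delta>_lim
      z_sol z_nonzero z_eig z_not_per
    by unfold_locales
  have pos: "\<forall>\<^sub>F \<epsilon> in at_right 0. (0::real) < \<epsilon>"
    by (rule eventually_at_right_less)
  show ?thesis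
  proof (intro ballI conjI impI)
    fix t assume t: "t \<in> {0..T}"
    note lim = rescaled_pairing_tendsto[OF t, unfolded adjoint_melnikov_def]
    {
      assume "\<rho> / (\<rho> - 1) * integral {t - T..t} (\<lambda>s. z s \<bullet> g s (x0 s) 0) > 0"
      with lim have "\<forall>\<^sub>F \<epsilon> in at_right 0. z t \<bullet> offset \<epsilon> t / \<epsilon> > 0"
        by (rule order_tendstoD(1))
      with pos show "\<forall>\<^sub>F \<epsilon> in at_right 0. cos_angle (z t) (xe \<epsilon> (t + \<Delta> \<epsilon>) - x0 t) > 0"
        by eventually_elim (simp add: cos_angle_pos_iff offset_def zero_less_divide_iff)
    next
      assume "\<rho> / (\<rho> - 1) * integral {t - T..t} (\<lambda>s. z s \<bullet> g s (x0 s) 0) < 0"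
      with lim have "\<forall>\<^sub>F \<epsilon> in at_right 0. z t \<bullet> offset \<epsilon> t / \<epsilon> < 0"
        by (rule order_tendstoD(2))
      with pos show "\<forall>\<^sub>F \<epsilon> in at_right 0. cos_angle (z t) (xe \<epsilon> (t + \<Delta> \<epsilon>) - x0 t) < 0"
        by eventually_elim (simp add: cos_angle_neg_iff offset_def divide_less_0_iff)
    }
  qed
qed

end
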